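(* Let $X$ be a finite set of proposals. Every profile-index-based DSF $\Delta_\delta$ induced by a neutral profile index function $\delta$ satisfies Clone Consistency: for every profile $R$ and proposals $x,x',y$ such that $x$ and $x'$ are clones in $R$ but $x$ and $y$ are not clones in $R$, if $\{x,y\}\subseteq\Delta_\delta(R)$ then $\{x,x',y\}\subseteq\Delta_\delta(R)$.
   Context: $X!$ is the set of strict linear orders on $X$; a profile is a function $R:N\to X!$ with $N\subset\mathbb{N}$ finite and nonempty. A profile index function is a function $\delta$ from the set of all profiles to $\mathbb{R}$; it is neutral if $\delta(R)=\delta(\sigma(R))$ for every permutation $\sigma:X\to X$ (applied to rename proposals in every ranking). For a proposal $x$, $R^{\hat{x}}$ is the profile obtained from $R$ by moving $x$ to the top of every agent's ranking (leaving the relative order of the other proposals unchanged). The profile-index-based DSF is $\Delta_\delta(R)=\arg\min_{x\in X}\delta(R^{\hat{x}})$. Two proposals are clones in $R$ if they appear adjacent to one another in every agent's ranking in $R$. *)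

theory Defs
  imports Main "HOL.Real"
begin

text \<open>Proposals form a finite type 'a (X = UNIV). A ranking is a strict linear order
 r on X, where (a, b) \<in> r means a is ranked above b.\<close>

type_synonym 'a ranking = "('a \<times> 'a) set"
type_synonym 'a profile = "nat \<Rightarrow> 'a ranking option"

definition is_ranking :: "'a ranking \<Rightarrow> bool" where
  "is_ranking r \<longleftrightarrow> strict_linear_order_on UNIV r"

definition is_profile :: "'a profile \<Rightarrow> bool" where
  "is_profile R \<longleftrightarrow> finite (dom R) \<and> dom R \<noteq> {} \<and> (\<forall>i r. R i = Some r \<longrightarrow> is_ranking r)"

definition rename_profile :: "('a \<Rightarrow> 'a) \<Rightarrow> 'a profile \<Rightarrow> 'a profile" where
  "rename_profile \<sigma> R = (\<lambda>i. map_option (\<lambda>r. map_prod \<sigma> \<sigma> ` r) (R i))"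

definition neutral :: "('a profile \<Rightarrow> real) \<Rightarrow> bool" where
  "neutral \<delta> \<longleftrightarrow> (\<forall>R \<sigma>. is_profile R \<longrightarrow> bij \<sigma> \<longrightarrow> \<delta> R = \<delta> (rename_profile \<sigma> R))"

definition move_top :: "'a \<Rightarrow> 'a ranking \<Rightarrow> 'a ranking" where
  "move_top x r = {(a, b) \<in> r. a \<noteq> x \<and> b \<noteq> x} \<union> {(x, b) | b. b \<noteq> x}"

definition hat_profile :: "'a profile \<Rightarrow> 'a \<Rightarrow> 'a profile" where
  "hat_profile R x = (\<lambda>i. map_option (move_top x) (R i))"

definition DSF :: "('a profile \<Rightarrow> real) \<Rightarrow> 'a profile \<Rightarrow> 'a set" where
  "DSF \<delta> R = {x. \<forall>z. \<delta> (hat_profile R x) \<le> \<delta> (hat_profile R z)}"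

definition adjacent :: "'a ranking \<Rightarrow> 'a \<Rightarrow> 'a \<Rightarrow> bool" where
  "adjacent r x x' \<longleftrightarrow> \<not> (\<exists>z. ((x, z) \<in> r \<and> (z, x') \<in> r) \<or> ((x', z) \<in> r \<and> (z, x) \<in> r))"

definition clones :: "'a profile \<Rightarrow> 'a \<Rightarrow> 'a \<Rightarrow> bool" where
  "clones R x x' \<longleftrightarrow> (\<forall>i r. R i = Some r \<longrightarrow> adjacent r x x')"

end

theory Submission
  imports Defs "HOL-Combinatorics.Transposition"
begin

text \<open>If x and x' are clones in R, then swapping the names x and x' turns the profile
 obtained by lifting x to the top into the one obtained by lifting x': in every ranking, the
 lifted proposal and its clone change places, and the clone ends up exactly where the lifted
 proposal used to be. By neutrality both lifted profiles have the same index, so x' is a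
 winner whenever x is.\<close>

lemma is_ranking_move_top:
  assumes "is_ranking r"
  shows "is_ranking (move_top x r)"
proof -
  have "trans r" "irrefl r" "total r"
    using assms unfolding is_ranking_def strict_linear_order_on_def by auto
  then have "trans (move_top x r)" "irrefl (move_top x r)" "total (move_top x r)"
    unfolding move_top_def trans_def irrefl_def total_on_def by blast+
  then show ?thesis
    unfolding is_ranking_def strict_linear_order_on_def by blast
qed

lemma is_profile_hat_profile:
  assumes "is_profile R"
  shows "is_profile (hat_profile R x)"
proof -
  have "dom (hat_profile R x) = dom R"
    by (simp add: hat_profile_def dom_def)
  moreover have "is_ranking r" if "hat_profile R x i = Some r" for i r
    using that assms unfolding is_profile_def hat_profile_def by (auto intro: is_ranking_move_top)
  ultimately show ?thesis
    using assms unfolding is_profile_def by simp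
qed

lemma adjacent_ranked_alike:
  assumes "is_ranking r" "adjacent r x x'" "c \<noteq> x" "c \<noteq> x'"
  shows "(x, c) \<in> r \<longleftrightarrow> (x', c) \<in> r"
    and "(c, x) \<in> r \<longleftrightarrow> (c, x') \<in> r"
proof -
  have "total r" using assms(1) unfolding is_ranking_def strict_linear_order_on_def by blast
  then have "(x, c) \<in> r \<or> (c, x) \<in> r" "(x', c) \<in> r \<or> (c, x') \<in> r"
    using assms(3,4) unfolding total_on_def by blast+
  then show "(x, c) \<in> r \<longleftrightarrow> (x', c) \<in> r" "(c, x) \<in> r \<longleftrightarrow> (c, x') \<in> r"
    using assms(2) unfolding adjacent_def by blast+
qed

lemma adjacent_transpose_iff:
  assumes "is_ranking r" "adjacent r x x'" "a \<noteq> x'" "b \<noteq> x'"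
  shows "(transpose x x' a, transpose x x' b) \<in> r \<longleftrightarrow> (a, b) \<in> r"
proof -
  have "irrefl r" using assms(1) unfolding is_ranking_def strict_linear_order_on_def by blast
  then show ?thesis
    using assms adjacent_ranked_alike[OF assms(1,2)]
    by (cases "a = x"; cases "b = x") (auto simp: irrefl_def)
qed

lemma move_top_transpose:
  assumes "is_ranking r" "adjacent r x x'"
  shows "map_prod (transpose x x') (transpose x x') ` move_top x r = move_top x' r"
proof -
  let ?\<tau> = "transpose x x'"
  have "map_prod ?\<tau> ?\<tau> ` A = map_prod ?\<tau> ?\<tau> -` A" for A :: "'a ranking"
    by (force simp: image_iff)
  moreover have "(?\<tau> a, ?\<tau> b) \<in> move_top x r \<longleftrightarrow> (a, b) \<in> move_top x' r" for a b
    using adjacent_transpose_iff[OF assms, of a b]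
    by (auto simp: move_top_def transpose_eq_iff)
  ultimately show ?thesis by auto
qed

lemma rename_transpose_hat_profile:
  assumes "is_profile R" "clones R x x'"
  shows "rename_profile (transpose x x') (hat_profile R x) = hat_profile R x'"
proof
  fix i
  show "rename_profile (transpose x x') (hat_profile R x) i = hat_profile R x' i"
  proof (cases "R i")
    case (Some r)
    then have "is_ranking r" "adjacent r x x'"
      using assms unfolding is_profile_def clones_def by auto
    then show ?thesis
      using Some move_top_transpose by (simp add: rename_profile_def hat_profile_def)
  qed (simp add: rename_profile_def hat_profile_def)
qed

lemma neutral_hat_profile_clones:
  assumes "neutral \<delta>" "is_profile R" "clones R x x'"
  shows "\<delta> (hat_profile R x) = \<delta> (hat_profile R x')"
  using assms is_profile_hat_profile rename_transpose_hat_profile bij_transpose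
  unfolding neutral_def by metis

lemma DSF_clone:
  assumes "neutral \<delta>" "is_profile R" "clones R x x'" "x \<in> DSF \<delta> R"
  shows "x' \<in> DSF \<delta> R"
  using assms(4) neutral_hat_profile_clones[OF assms(1-3)] by (simp add: DSF_def)

theorem proposition4:
  fixes \<delta> :: "('a::finite) profile \<Rightarrow> real"
    and R :: "'a profile"
    and x x' y :: 'a
  assumes "neutral \<delta>"
    and "is_profile R"
    and "clones R x x'"
    and "\<not> clones R x y"
    and "{x, y} \<subseteq> DSF \<delta> R"
  shows "{x, x', y} \<subseteq> DSF \<delta> R"
  using assms(5) DSF_clone[OF assms(1-3)] by simp

end
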